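(* Let $S$ be an inverse semigroup with zero. Two distinct non-zero elements $x,y\in S$ are adjacent in $\mathcal{P}_L(S)$ if and only if $xy^{-1}\neq 0$.
   Context: For an inverse semigroup $S$, $x^{-1}$ denotes the unique inverse of $x$ (the unique $y$ with $xyx=x$, $yxy=y$). For $a\in S$, $S^1a=\{sa:s\in S\}\cup\{a\}$. $\mathcal{P}_L(S)$ is the simple graph whose vertices are the non-zero elements of $S$, two distinct vertices $a,b$ being adjacent iff $S^1a\cap S^1b$ contains an element different from $0$. *)

theory Defs
  imports Main
begin

text \<open>An inverse semigroup with zero: a semigroup with a two-sided zero in which
every element x has a unique y with x*y*x = x and y*x*y = y. The semigroup S
is the whole carrier type.\<close>

class inverse_semigroup_zero = semigroup_mult + mult_zero +
  assumes unique_inverse: "\<exists>!y. x * y * x = x \<and> y * x * y = y"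

definition sinv :: "'a::inverse_semigroup_zero \<Rightarrow> 'a" where
  "sinv x = (THE y. x * y * x = x \<and> y * x * y = y)"

definition S1_left :: "'a::inverse_semigroup_zero \<Rightarrow> 'a set" where
  "S1_left a = {s * a | s. True} \<union> {a}"

definition PL_adj :: "'a::inverse_semigroup_zero \<Rightarrow> 'a \<Rightarrow> bool" where
  "PL_adj a b \<longleftrightarrow> a \<noteq> 0 \<and> b \<noteq> 0 \<and> a \<noteq> b \<and>
     (\<exists>c \<in> S1_left a \<inter> S1_left b. c \<noteq> 0)"

end

theory Submission
  imports Defs
begin

text \<open>Every element of \<open>S\<^sup>1a\<close> is fixed on the right by the idempotent \<open>a\<^sup>-\<^sup>1a\<close>, so a common
element \<open>c\<close> of \<open>S\<^sup>1x\<close> and \<open>S\<^sup>1y\<close> satisfies \<open>c = c x\<^sup>-\<^sup>1 (x y\<^sup>-\<^sup>1) y\<close> and vanishes when \<open>x y\<^sup>-\<^sup>1 = 0\<close>.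
Conversely \<open>x y\<^sup>-\<^sup>1 y\<close> lies in \<open>S\<^sup>1y\<close>, is non-zero when \<open>x y\<^sup>-\<^sup>1\<close> is, and lies in \<open>S\<^sup>1x\<close> because the
idempotents \<open>x\<^sup>-\<^sup>1x\<close> and \<open>y\<^sup>-\<^sup>1y\<close> commute.\<close>

lemma sinv_inverse:
  fixes x :: "'a::inverse_semigroup_zero"
  shows "x * sinv x * x = x" and "sinv x * x * sinv x = sinv x"
  using theI'[OF unique_inverse[of x]] unfolding sinv_def by blast+

lemma sinv_eqI:
  fixes x y :: "'a::inverse_semigroup_zero"
  assumes "x * y * x = x" and "y * x * y = y"
  shows "sinv x = y"
  using unique_inverse[of x] sinv_inverse[of x] assms by blast

lemma sinv_idempotent:
  fixes e :: "'a::inverse_semigroup_zero"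
  assumes "e * e = e"
  shows "sinv e = e"
  using assms by (intro sinv_eqI) simp_all

lemma idempotent_sinv_mult:
  fixes x :: "'a::inverse_semigroup_zero"
  shows "(sinv x * x) * (sinv x * x) = sinv x * x"
  by (metis sinv_inverse(2) mult.assoc)

lemma idempotent_mult_idempotent:
  fixes e f :: "'a::inverse_semigroup_zero"
  assumes e: "e * e = e" and f: "f * f = f"
  shows "(e * f) * (e * f) = e * f"
proof -
  define z where "z = sinv (e * f)"
  have z1: "(e * f) * z * (e * f) = e * f" and z2: "z * (e * f) * z = z"
    using sinv_inverse[of "e * f"] unfolding z_def by blast+
  text \<open>\<open>f z e\<close> is another inverse of \<open>e f\<close>.\<close>
  have "(e * f) * (f * z * e) * (e * f) = e * f"
    using z1 e f by (metis mult.assoc)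
  moreover have "(f * z * e) * (e * f) * (f * z * e) = f * z * e"
    using z2 e f by (metis mult.assoc)
  ultimately have z_eq: "z = f * z * e"
    using sinv_eqI unfolding z_def by metis
  have z_idem: "z * z = z"
  proof -
    have "z * z = f * (z * (e * f) * z) * e"
      using z_eq by (metis mult.assoc)
    also have "\<dots> = z" using z2 z_eq by simp
    finally show ?thesis .
  qed
  have "e * f = z"
    using sinv_eqI[of z "e * f"] sinv_idempotent[OF z_idem] z1 z2
    by (metis mult.assoc)
  then show ?thesis using z_idem by simp
qed

lemma idempotents_commute:
  fixes e f :: "'a::inverse_semigroup_zero"
  assumes e: "e * e = e" and f: "f * f = f"
  shows "e * f = f * e"
proof -
  have ef: "(e * f) * (e * f) = e * f" by (rule idempotent_mult_idempotent[OF e f])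
  have fe: "(f * e) * (f * e) = f * e" by (rule idempotent_mult_idempotent[OF f e])
  have "(e * f) * (f * e) * (e * f) = e * f"
    using e f ef by (metis mult.assoc)
  moreover have "(f * e) * (e * f) * (f * e) = f * e"
    using e f fe by (metis mult.assoc)
  ultimately have "sinv (e * f) = f * e" by (rule sinv_eqI)
  then show ?thesis using sinv_idempotent[OF ef] by simp
qed

lemma S1_left_mult_sinv:
  fixes a c :: "'a::inverse_semigroup_zero"
  assumes "c \<in> S1_left a"
  shows "c * sinv a * a = c"
  using assms sinv_inverse(1)[of a] unfolding S1_left_def by (auto simp: mult.assoc)

lemma S1_left_inter_eq:
  fixes x y c :: "'a::inverse_semigroup_zero"
  assumes "c \<in> S1_left x \<inter> S1_left y"
  shows "c = c * sinv x * (x * sinv y) * y"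
  using assms S1_left_mult_sinv[of c x] S1_left_mult_sinv[of c y]
  by (metis IntE mult.assoc)

lemma mult_sinv_mult_mem_S1_left_inter:
  fixes x y :: "'a::inverse_semigroup_zero"
  shows "x * sinv y * y \<in> S1_left x \<inter> S1_left y"
proof -
  have "x * sinv y * y = x * (sinv x * x * (sinv y * y))"
    using sinv_inverse(1)[of x] by (metis mult.assoc)
  also have "\<dots> = x * (sinv y * y * (sinv x * x))"
    using idempotents_commute[OF idempotent_sinv_mult[of x] idempotent_sinv_mult[of y]] by simp
  also have "\<dots> = (x * sinv y * y * sinv x) * x"
    by (simp add: mult.assoc)
  finally show ?thesis
    unfolding S1_left_def by blast
qed

lemma mult_sinv_mult_eq_0_iff:
  fixes x y :: "'a::inverse_semigroup_zero"
  shows "x * sinv y * y = 0 \<longleftrightarrow> x * sinv y = 0"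
  by (metis sinv_inverse(2) mult.assoc mult_zero_left mult_zero_right)

lemma S1_left_inter_nonzero_iff:
  fixes x y :: "'a::inverse_semigroup_zero"
  shows "(\<exists>c \<in> S1_left x \<inter> S1_left y. c \<noteq> 0) \<longleftrightarrow> x * sinv y \<noteq> 0"
proof
  assume "\<exists>c \<in> S1_left x \<inter> S1_left y. c \<noteq> 0"
  then show "x * sinv y \<noteq> 0"
    using S1_left_inter_eq by (metis mult_zero_left mult_zero_right)
next
  assume "x * sinv y \<noteq> 0"
  then show "\<exists>c \<in> S1_left x \<inter> S1_left y. c \<noteq> 0"
    using mult_sinv_mult_mem_S1_left_inter mult_sinv_mult_eq_0_iff by blast
qed

theorem mainTheorem10:
  fixes x y :: "'a::inverse_semigroup_zero"
  assumes "x \<noteq> 0" and "y \<noteq> 0" and "x \<noteq> y"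
  shows "PL_adj x y \<longleftrightarrow> x * sinv y \<noteq> 0"
  using assms S1_left_inter_nonzero_iff[of x y] unfolding PL_adj_def by blast

end
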